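(* Let $H$ be any hypergraph. If there exist a hypergraph $H'$ and an integer $s\ge 2$ such that $H'\subseteq H\subseteq H'(s)$, then $\pi(H)=\pi(H')$.
   Context: A hypergraph $H=(V,E)$ has finite vertex set $V$ and edge set $E\subseteq 2^V$; $R(H)=\{|F|:F\in E\}$. $H_1\subseteq H_2$ means there is an injective $f\colon V(H_1)\to V(H_2)$ with $f(F)\in E(H_2)$ for all $F\in E(H_1)$. For $G$ on $n$ vertices, $h_n(G)=\sum_{F\in E(G)}1/\binom{n}{|F|}$; $\pi_n(H)=\max\{h_n(G): G\text{ on } n \text{ vertices}, R(G)\subseteq R(H), H\not\subseteq G\}$, $\pi(H)=\lim_n\pi_n(H)$. For $H$ on vertex set $\{1,\dots,m\}$, the blowup $H(s)$ has vertex set $V_1\sqcup\dots\sqcup V_m$ with $|V_i|=s$ and edge set $\bigcup_{F\in E(H)}\prod_{i\in F}V_i$. *)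

theory Defs
  imports Complex_Main
begin

type_synonym 'a hypergraph = "'a set \<times> 'a set set"

definition hypergraph :: "'a hypergraph \<Rightarrow> bool" where
  "hypergraph H \<longleftrightarrow> finite (fst H) \<and> snd H \<subseteq> Pow (fst H)"

definition edge_sizes :: "'a hypergraph \<Rightarrow> nat set" where
  "edge_sizes H = card ` snd H"

definition subhyp :: "'a hypergraph \<Rightarrow> 'b hypergraph \<Rightarrow> bool" where
  "subhyp H1 H2 \<longleftrightarrow> (\<exists>f. inj_on f (fst H1) \<and> f ` fst H1 \<subseteq> fst H2 \<and>
                           (\<forall>F\<in>snd H1. f ` F \<in> snd H2))"

definition h_dens :: "nat \<Rightarrow> 'a hypergraph \<Rightarrow> real" where
  "h_dens n G = (\<Sum>F\<in>snd G. 1 / real (n choose card F))"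

definition pi_n :: "'a hypergraph \<Rightarrow> nat \<Rightarrow> real" where
  "pi_n H n = Max {h_dens n G | G :: nat hypergraph.
       hypergraph G \<and> fst G = {..<n} \<and> edge_sizes G \<subseteq> edge_sizes H \<and> \<not> subhyp H G}"

definition pi_lim :: "'a hypergraph \<Rightarrow> real" where
  "pi_lim H = lim (\<lambda>n. pi_n H n)"

text \<open>Blowup H(s): vertex i replaced by the s copies (i,0),...,(i,s-1); every edge F becomes
  all transversals, i.e. the sets {(i, g i) | i \<in> F} with g i < s.\<close>
definition blowup :: "'a hypergraph \<Rightarrow> nat \<Rightarrow> ('a \<times> nat) hypergraph" where
  "blowup H s = (fst H \<times> {..<s},
     {(\<lambda>i. (i, g i)) ` F | F g. F \<in> snd H \<and> (\<forall>i\<in>F. g i < s)})"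

end

theory Submission
  imports Defs "HOL-Library.FuncSet"
begin

text \<open>
  From \<open>H' \<subseteq> H \<subseteq> H'(s)\<close>, the three hypergraphs have the same edge sizes, and
  monotonicity of \<open>\<pi>\<^sub>n\<close> under containment gives \<open>\<pi>(H') \<le> \<pi>(H)\<close>.
  Conversely fix \<open>\<epsilon> > 0\<close> and \<open>m\<close> with \<open>\<pi>\<^sub>m(H') < \<pi>(H') + \<epsilon>/2\<close>. If \<open>G\<close> on \<open>n\<close> vertices
  has \<open>h\<^sub>n(G) > \<pi>(H') + \<epsilon>\<close>, then averaging \<open>h\<^sub>m\<close> over the induced \<open>m\<close>-vertex subhypergraphs
  shows that a positive proportion of them are denser than \<open>\<pi>\<^sub>m(H')\<close> and hence contain \<open>H'\<close>;
  so \<open>G\<close> has \<open>\<Omega>(n\<^sup>v)\<close> embeddings of \<open>H'\<close>, \<open>v = |V(H')|\<close>. By Erdos' supersaturation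
  argument, any positive proportion of all \<open>v\<close>-tuples contains a box \<open>W\<^sub>1 \<times> \<dots> \<times> W\<^sub>v\<close> with
  \<open>|W\<^sub>i| = s\<close>; a box of embeddings is a copy of \<open>H'(s) \<supseteq> H\<close>. Hence \<open>\<pi>\<^sub>n(H) \<le> \<pi>(H') + \<epsilon>\<close>
  for large \<open>n\<close>.
\<close>

section \<open>Convexity inequalities\<close>

lemma Chebyshev_sum_similarly_ordered:
  fixes x y :: "'i \<Rightarrow> real"
  assumes "finite A" and "\<And>i j. i \<in> A \<Longrightarrow> j \<in> A \<Longrightarrow> 0 \<le> (x i - x j) * (y i - y j)"
  shows "(\<Sum>i\<in>A. x i) * (\<Sum>i\<in>A. y i) \<le> real (card A) * (\<Sum>i\<in>A. x i * y i)"
proof -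
  have "0 \<le> (\<Sum>i\<in>A. \<Sum>j\<in>A. (x i - x j) * (y i - y j))"
    using assms by (intro sum_nonneg) auto
  also have "\<dots> = 2 * (real (card A) * (\<Sum>i\<in>A. x i * y i) - (\<Sum>i\<in>A. x i) * (\<Sum>i\<in>A. y i))"
    by (simp add: algebra_simps sum_subtractf sum.distrib sum_distrib_left sum_distrib_right
        sum.swap[of "\<lambda>i j. x j * y i"])
  finally show ?thesis by simp
qed

lemma power_sum_le_card_power_mult_sum_power:
  fixes x :: "'i \<Rightarrow> real"
  assumes "finite A" and "\<And>i. i \<in> A \<Longrightarrow> 0 \<le> x i"
  shows "(\<Sum>i\<in>A. x i) ^ Suc k \<le> real (card A) ^ k * (\<Sum>i\<in>A. x i ^ Suc k)"
proof (induction k)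
  case 0
  then show ?case by simp
next
  case (Suc k)
  have similarly_ordered: "0 \<le> (x i - x j) * (x i ^ Suc k - x j ^ Suc k)" if "i \<in> A" "j \<in> A" for i j
  proof (cases "x i \<le> x j")
    case True
    then have "x i ^ Suc k \<le> x j ^ Suc k"
      using assms(2) that by (intro power_mono) auto
    then show ?thesis using True by (intro mult_nonpos_nonpos) auto
  next
    case False
    then have "x j ^ Suc k \<le> x i ^ Suc k"
      using assms(2) that by (intro power_mono) auto
    then show ?thesis using False by (intro mult_nonneg_nonneg) auto
  qed
  have "(\<Sum>i\<in>A. x i) ^ Suc (Suc k) \<le> (\<Sum>i\<in>A. x i) * (real (card A) ^ k * (\<Sum>i\<in>A. x i ^ Suc k))"
    using Suc assms by (subst power_Suc) (intro mult_left_mono sum_nonneg, auto)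
  also have "\<dots> = real (card A) ^ k * ((\<Sum>i\<in>A. x i) * (\<Sum>i\<in>A. x i ^ Suc k))"
    by simp
  also have "\<dots> \<le> real (card A) ^ k * (real (card A) * (\<Sum>i\<in>A. x i * x i ^ Suc k))"
    by (intro mult_left_mono Chebyshev_sum_similarly_ordered assms(1) similarly_ordered) auto
  finally show ?case
    by (simp add: mult_ac)
qed

text \<open>Convexity of \<open>d \<mapsto> binom d s\<close>, in the crude form \<open>binom d s \<ge> ((d - s) / s)\<^sup>s\<close>
  combined with the power mean inequality.\<close>
lemma power_le_sum_binomial:
  fixes d :: "'i \<Rightarrow> nat"
  assumes "finite A" and "s \<ge> 1" and "0 \<le> t"
    and "t \<le> (\<Sum>r\<in>A. real (d r)) - real s * real (card A)"
  shows "t ^ s \<le> real s ^ s * real (card A) ^ (s - 1) * (\<Sum>r\<in>A. real (d r choose s))"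
proof -
  define x where "x r = real (d r - s) / real s" for r
  have x_nonneg: "0 \<le> x r" for r
    by (simp add: x_def)
  have x_power_le: "x r ^ s \<le> real (d r choose s)" for r
  proof (cases "s \<le> d r")
    case True
    have "x r ^ s \<le> (real (d r) / real s) ^ s"
      using x_nonneg by (intro power_mono) (auto simp: x_def divide_right_mono)
    also have "\<dots> \<le> real (d r choose s)"
      using binomial_ge_n_over_k_pow_k[OF True] by simp
    finally show ?thesis .
  next
    case False
    then show ?thesis using assms(2) by (simp add: x_def zero_power)
  qed
  have "t / real s \<le> ((\<Sum>r\<in>A. real (d r)) - real s * real (card A)) / real s"
    using assms(2,4) by (simp add: divide_right_mono)
  also have "\<dots> = (\<Sum>r\<in>A. (real (d r) - real s) / real s)"
    by (simp add: sum_subtractf flip: sum_divide_distrib)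
  also have "\<dots> \<le> (\<Sum>r\<in>A. x r)"
    by (intro sum_mono) (simp add: x_def divide_right_mono)
  finally have "(t / real s) ^ s \<le> (\<Sum>r\<in>A. x r) ^ s"
    using assms(2,3) by (intro power_mono) auto
  also have "\<dots> \<le> real (card A) ^ (s - 1) * (\<Sum>r\<in>A. x r ^ s)"
    using power_sum_le_card_power_mult_sum_power[OF assms(1) x_nonneg, where k = "s - 1"] assms(2) by simp
  also have "\<dots> \<le> real (card A) ^ (s - 1) * (\<Sum>r\<in>A. real (d r choose s))"
    by (intro mult_left_mono sum_mono x_power_le) auto
  finally show ?thesis
    using assms(2) by (simp add: power_divide divide_le_eq mult.commute mult.left_commute)
qed

section \<open>Boxes in dense sets of tuples\<close>

lemma card_eq_sum_card_fibres:
  assumes "finite I" and "x \<notin> I" and "finite U" and "T \<subseteq> PiE (insert x I) (\<lambda>_. U)"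
  shows "card T = (\<Sum>r\<in>PiE I (\<lambda>_. U). card {y \<in> U. r(x := y) \<in> T})"
proof -
  define A where "A = PiE I (\<lambda>_. U)"
  define L where "L r = {y \<in> U. r(x := y) \<in> T}" for r
  have "T = (\<lambda>(r, y). r(x := y)) ` Sigma A L"
  proof
    show "T \<subseteq> (\<lambda>(r, y). r(x := y)) ` Sigma A L"
    proof
      fix f assume "f \<in> T"
      moreover from this obtain y r where "y \<in> U" "r \<in> A" "f = r(x := y)"
        using assms(4) by (auto simp: A_def PiE_insert_eq)
      ultimately show "f \<in> (\<lambda>(r, y). r(x := y)) ` Sigma A L"
        by (auto simp: L_def)
    qed
  qed (auto simp: L_def)
  moreover have "inj_on (\<lambda>(r, y). r(x := y)) (Sigma A L)"
    using inj_onD[OF inj_combinator[OF assms(2), of "\<lambda>_. U"]]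
    by (intro inj_onI) (auto simp: A_def L_def)
  ultimately have "card T = card (Sigma A L)"
    by (simp add: card_image)
  also have "\<dots> = (\<Sum>r\<in>A. card (L r))"
    using assms(1,3) by (intro card_SigmaI) (auto simp: A_def L_def finite_PiE)
  finally show ?thesis
    by (simp add: A_def L_def)
qed

lemma sum_binomial_card_double_counting:
  assumes "finite A" and "finite U" and "\<And>r. r \<in> A \<Longrightarrow> L r \<subseteq> U"
  shows "(\<Sum>r\<in>A. card (L r) choose s) = (\<Sum>Y | Y \<subseteq> U \<and> card Y = s. card {r \<in> A. Y \<subseteq> L r})"
proof -
  define Ys where "Ys = {Y. Y \<subseteq> U \<and> card Y = s}"
  have finite_Ys: "finite Ys"
    using assms(2) by (simp add: Ys_def)
  have "card (L r) choose s = card {Y \<in> Ys. Y \<subseteq> L r}" if "r \<in> A" for r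
  proof -
    have "{Y \<in> Ys. Y \<subseteq> L r} = {Y. Y \<subseteq> L r \<and> card Y = s}"
      using assms(3)[OF that] by (auto simp: Ys_def)
    then show ?thesis
      using n_subsets[of "L r" s] finite_subset[OF assms(3)[OF that] assms(2)] by simp
  qed
  then have "(\<Sum>r\<in>A. card (L r) choose s) = (\<Sum>r\<in>A. \<Sum>Y\<in>Ys. if Y \<subseteq> L r then 1 else 0)"
    using finite_Ys by (simp add: sum.If_cases Int_def conj_commute)
  also have "\<dots> = (\<Sum>Y\<in>Ys. \<Sum>r\<in>A. if Y \<subseteq> L r then 1 else 0)"
    by (rule sum.swap)
  also have "\<dots> = (\<Sum>Y\<in>Ys. card {r \<in> A. Y \<subseteq> L r})"
    using assms(1) by (simp add: sum.If_cases Int_def conj_commute)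
  finally show ?thesis
    by (simp add: Ys_def)
qed

lemma sum_fibre_binomials_lower_bound:
  fixes T :: "('i \<Rightarrow> nat) set"
  assumes "finite I" and "x \<notin> I" and "c > 0" and "s \<ge> 1" and "2 * real s \<le> c * real n"
    and "T \<subseteq> PiE (insert x I) (\<lambda>_. {..<n})" and "c * real n ^ Suc (card I) \<le> real (card T)"
  shows "(c / (2 * real s)) ^ s * real n ^ (card I + s) \<le>
    (\<Sum>r\<in>PiE I (\<lambda>_. {..<n}). real (card {y \<in> {..<n}. r(x := y) \<in> T} choose s))"
proof -
  define k where "k = card I"
  define A where "A = PiE I (\<lambda>_. {..<n::nat})"
  define L where "L r = {y \<in> {..<n}. r(x := y) \<in> T}" for r
  have "n > 0"
    using assms(4,5) by (cases n) auto
  have card_A: "card A = n ^ k"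
    using assms(1) by (simp add: A_def k_def card_funcsetE)
  have "real s * real (card A) \<le> c * real n ^ Suc k / 2"
    using mult_right_mono[OF assms(5), of "real n ^ k"] by (simp add: card_A mult_ac)
  then have "c * real n ^ Suc k / 2 \<le> (\<Sum>r\<in>A. real (card (L r))) - real s * real (card A)"
    using assms(7) card_eq_sum_card_fibres[OF assms(1,2) _ assms(6)]
    by (simp add: A_def L_def k_def)
  then have "(c * real n ^ Suc k / 2) ^ s \<le>
      real s ^ s * real (card A) ^ (s - 1) * (\<Sum>r\<in>A. real (card (L r) choose s))"
    using assms(1,3,4) by (intro power_le_sum_binomial) (auto simp: A_def finite_PiE)
  then have "(c * real n ^ Suc k / 2) ^ s \<le>
      real s ^ s * real n ^ (k * (s - 1)) * (\<Sum>r\<in>A. real (card (L r) choose s))"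
    by (simp add: card_A power_mult)
  moreover have "(c * real n ^ Suc k / 2) ^ s =
      real s ^ s * real n ^ (k * (s - 1)) * ((c / (2 * real s)) ^ s * real n ^ (k + s))"
  proof -
    have coefficient: "real s ^ s * (c / (2 * real s)) ^ s = (c / 2) ^ s"
      using assms(4) by (simp flip: power_mult_distrib)
    have "k * (s - 1) + (k + s) = Suc k * s"
      using assms(4) by (cases s) simp_all
    then have exponent: "real n ^ (k * (s - 1)) * real n ^ (k + s) = (real n ^ Suc k) ^ s"
      by (metis power_add power_mult mult.commute)
    have "(c * real n ^ Suc k / 2) ^ s = (c / 2) ^ s * (real n ^ Suc k) ^ s"
      by (simp add: power_mult_distrib power_divide)
    also have "\<dots> = (real s ^ s * (c / (2 * real s)) ^ s) * (real n ^ (k * (s - 1)) * real n ^ (k + s))"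
      by (simp only: coefficient exponent)
    finally show ?thesis
      by (simp only: mult_ac)
  qed
  ultimately show ?thesis
    using \<open>n > 0\<close> assms(4) by (simp add: mult_le_cancel_left_pos A_def L_def k_def)
qed

lemma dense_set_of_tuples_has_dense_section:
  fixes T :: "('i \<Rightarrow> nat) set"
  assumes "finite I" and "x \<notin> I" and "c > 0" and "s \<ge> 1" and "s \<le> n" and "2 * real s \<le> c * real n"
    and "T \<subseteq> PiE (insert x I) (\<lambda>_. {..<n})" and "c * real n ^ Suc (card I) \<le> real (card T)"
  shows "\<exists>Y \<subseteq> {..<n}. card Y = s \<and>
    (c / (2 * real s)) ^ s * real n ^ card I \<le> real (card {r \<in> PiE I (\<lambda>_. {..<n}). \<forall>y\<in>Y. r(x := y) \<in> T})"
proof -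
  define A where "A = PiE I (\<lambda>_. {..<n::nat})"
  define L where "L r = {y \<in> {..<n}. r(x := y) \<in> T}" for r
  define Ys where "Ys = {Y. Y \<subseteq> {..<n} \<and> card Y = s}"
  define M where "M Y = card {r \<in> A. Y \<subseteq> L r}" for Y
  have "finite Ys" "Ys \<noteq> {}"
    using assms(5) by (auto simp: Ys_def intro!: exI[of _ "{..<s}"])
  then have "Max (M ` Ys) \<in> M ` Ys"
    by simp
  then obtain Y where Y: "Y \<in> Ys" and Y_max: "M Y = Max (M ` Ys)"
    by auto
  have double_counting: "(\<Sum>r\<in>A. card (L r) choose s) = (\<Sum>Z\<in>Ys. M Z)"
    unfolding Ys_def M_def using assms(1)
    by (intro sum_binomial_card_double_counting) (auto simp: A_def L_def finite_PiE)
  have "(c / (2 * real s)) ^ s * real n ^ (card I + s) \<le> (\<Sum>r\<in>A. real (card (L r) choose s))"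
    unfolding A_def L_def by (rule sum_fibre_binomials_lower_bound[OF assms(1-4,6-8)])
  also have "\<dots> = real (\<Sum>Z\<in>Ys. M Z)"
    by (simp flip: double_counting)
  also have "\<dots> \<le> real (card Ys * M Y)"
    unfolding of_nat_le_iff using sum_bounded_above[of Ys M "M Y"] \<open>finite Ys\<close> by (simp add: Y_max)
  also have "\<dots> \<le> real (n ^ s * M Y)"
    unfolding of_nat_le_iff using binomial_le_pow[OF assms(5)] by (simp add: Ys_def n_subsets)
  finally have "(c / (2 * real s)) ^ s * real n ^ card I \<le> real (M Y)"
    using assms(4,5) by (simp add: power_add mult_ac)
  moreover have "{r \<in> A. Y \<subseteq> L r} = {r \<in> A. \<forall>y\<in>Y. r(x := y) \<in> T}"
    using Y by (auto simp: L_def Ys_def)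
  ultimately show ?thesis
    using Y by (auto simp: Ys_def M_def A_def)
qed

lemma PiE_insert_subset:
  assumes "x \<notin> I" and "PiE I W \<subseteq> {r. \<forall>y\<in>Y. r(x := y) \<in> T}"
  shows "PiE (insert x I) (W(x := Y)) \<subseteq> T"
proof
  fix g assume g: "g \<in> PiE (insert x I) (W(x := Y))"
  have "PiE I (W(x := Y)) = PiE I W"
    using assms(1) by (intro PiE_cong) auto
  with g obtain y r where "g = r(x := y)" "y \<in> Y" "r \<in> PiE I W"
    by (auto simp: PiE_insert_eq)
  then show "g \<in> T"
    using assms(2) by auto
qed

lemma dense_set_of_tuples_contains_box:
  fixes I :: "'i set" and c :: real
  assumes "finite I" and "c > 0" and "s \<ge> 1"
  shows "\<exists>N. \<forall>n\<ge>N. \<forall>T \<subseteq> PiE I (\<lambda>_. {..<n}). c * real n ^ card I \<le> real (card T) \<longrightarrow>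
           (\<exists>W. (\<forall>i\<in>I. W i \<subseteq> {..<n} \<and> card (W i) = s) \<and> PiE I W \<subseteq> T)"
  using assms(1,2)
proof (induction I arbitrary: c rule: finite_induct)
  case empty
  show ?case
  proof (intro exI[of _ 0] allI impI)
    fix n and T :: "('i \<Rightarrow> nat) set"
    assume "0 \<le> n" and "T \<subseteq> PiE {} (\<lambda>_. {..<n})" and "c * real n ^ card {} \<le> real (card T)"
    then have "T = PiE {} (\<lambda>_. {})"
      using empty.prems by (auto simp: subset_singleton_iff)
    then show "\<exists>W. (\<forall>i\<in>{}. W i \<subseteq> {..<n} \<and> card (W i) = s) \<and> PiE {} W \<subseteq> T"
      by auto
  qed
next
  case (insert x I)
  define c' where "c' = (c / (2 * real s)) ^ s"
  have "c' > 0"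
    using insert.prems assms(3) by (simp add: c'_def)
  then obtain N' where "\<forall>n\<ge>N'. \<forall>T \<subseteq> PiE I (\<lambda>_. {..<n}). c' * real n ^ card I \<le> real (card T) \<longrightarrow>
           (\<exists>W. (\<forall>i\<in>I. W i \<subseteq> {..<n} \<and> card (W i) = s) \<and> PiE I W \<subseteq> T)"
    using insert.IH[OF \<open>c' > 0\<close>] by blast
  note N' = this[rule_format]
  show ?case
  proof (intro exI[of _ "max N' (s + nat \<lceil>2 * real s / c\<rceil>)"] allI impI)
    fix n and T :: "('i \<Rightarrow> nat) set"
    assume n: "max N' (s + nat \<lceil>2 * real s / c\<rceil>) \<le> n" and T: "T \<subseteq> PiE (insert x I) (\<lambda>_. {..<n})"
      and dense: "c * real n ^ card (insert x I) \<le> real (card T)"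
    have "2 * real s / c \<le> real n"
      using n by linarith
    then have "2 * real s \<le> c * real n"
      using insert.prems by (simp add: field_simps)
    then obtain Y where Y: "Y \<subseteq> {..<n}" "card Y = s"
      and section_dense: "c' * real n ^ card I \<le> real (card {r \<in> PiE I (\<lambda>_. {..<n}). \<forall>y\<in>Y. r(x := y) \<in> T})"
      using dense_set_of_tuples_has_dense_section[OF insert.hyps insert.prems assms(3) _ _ T] n dense insert.hyps
      by (auto simp: c'_def)
    obtain W where W: "\<forall>i\<in>I. W i \<subseteq> {..<n} \<and> card (W i) = s"
      and box: "PiE I W \<subseteq> {r \<in> PiE I (\<lambda>_. {..<n}). \<forall>y\<in>Y. r(x := y) \<in> T}"
      using N'[OF _ _ section_dense] n by auto
    have "PiE (insert x I) (W(x := Y)) \<subseteq> T"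
      using box insert.hyps(2) by (intro PiE_insert_subset) auto
    then show "\<exists>W. (\<forall>i\<in>insert x I. W i \<subseteq> {..<n} \<and> card (W i) = s) \<and> PiE (insert x I) W \<subseteq> T"
      using W Y by (intro exI[of _ "W(x := Y)"]) auto
  qed
qed

section \<open>Embeddings and blowups\<close>

definition embeddings :: "'a hypergraph \<Rightarrow> 'b hypergraph \<Rightarrow> ('a \<Rightarrow> 'b) set" where
  "embeddings H G = {f \<in> fst H \<rightarrow>\<^sub>E fst G. inj_on f (fst H) \<and> (\<forall>F\<in>snd H. f ` F \<in> snd G)}"

lemma subhyp_iff_embeddings:
  assumes "hypergraph H"
  shows "subhyp H G \<longleftrightarrow> embeddings H G \<noteq> {}"
proof
  assume "subhyp H G"
  then obtain f where f: "inj_on f (fst H)" "f ` fst H \<subseteq> fst G" "\<forall>F\<in>snd H. f ` F \<in> snd G"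
    by (auto simp: subhyp_def)
  have "restrict f F ` F = f ` F" for F
    by simp
  moreover have "F \<subseteq> fst H" if "F \<in> snd H" for F
    using assms that by (auto simp: hypergraph_def)
  ultimately have "restrict f (fst H) \<in> embeddings H G"
    using f by (auto simp: embeddings_def image_restrict_eq subset_eq)
  then show "embeddings H G \<noteq> {}"
    by blast
next
  assume "embeddings H G \<noteq> {}"
  then show "subhyp H G"
    by (auto simp: embeddings_def subhyp_def)
qed

lemma embeddings_compose:
  assumes "hypergraph A" and f: "f \<in> embeddings A B" and g: "g \<in> embeddings B C"
  shows "restrict (g \<circ> f) (fst A) \<in> embeddings A C"
proof -
  have "inj_on (g \<circ> f) (fst A)"
    using f g by (intro comp_inj_on) (auto simp: embeddings_def intro: inj_on_subset)
  moreover have "restrict (g \<circ> f) (fst A) ` F = g ` f ` F" if "F \<in> snd A" for F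
    using that assms(1) by (auto simp: hypergraph_def)
  ultimately show ?thesis
    using f g by (auto simp: embeddings_def)
qed

lemma subhyp_trans:
  assumes "subhyp A B" and "subhyp B C"
  shows "subhyp A C"
proof -
  obtain f where f: "inj_on f (fst A)" "f ` fst A \<subseteq> fst B" "\<forall>F\<in>snd A. f ` F \<in> snd B"
    using assms(1) by (auto simp: subhyp_def)
  obtain g where g: "inj_on g (fst B)" "g ` fst B \<subseteq> fst C" "\<forall>F\<in>snd B. g ` F \<in> snd C"
    using assms(2) by (auto simp: subhyp_def)
  have "inj_on (g \<circ> f) (fst A)"
    using f g by (intro comp_inj_on) (auto intro: inj_on_subset)
  moreover have "\<forall>F\<in>snd A. (g \<circ> f) ` F \<in> snd C"
    using f(3) g(3) by (metis image_comp)
  ultimately show ?thesis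
    using f(2) g(2) unfolding subhyp_def by (intro exI[of _ "g \<circ> f"]) auto
qed

lemma edge_sizes_subhyp:
  assumes "hypergraph A" and "subhyp A B"
  shows "edge_sizes A \<subseteq> edge_sizes B"
proof
  fix k assume "k \<in> edge_sizes A"
  then obtain F where F: "F \<in> snd A" "k = card F"
    by (auto simp: edge_sizes_def)
  obtain f where f: "inj_on f (fst A)" "\<forall>F\<in>snd A. f ` F \<in> snd B"
    using assms(2) by (auto simp: subhyp_def)
  have "card (f ` F) = card F"
    using F(1) f(1) assms(1) by (intro card_image) (auto simp: hypergraph_def intro: inj_on_subset)
  then show "k \<in> edge_sizes B"
    using f(2) F by (auto simp: edge_sizes_def intro!: image_eqI[of _ _ "f ` F"])
qed

lemma edge_sizes_blowup: "edge_sizes (blowup H s) \<subseteq> edge_sizes H"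
proof
  fix k assume "k \<in> edge_sizes (blowup H s)"
  then obtain F and g :: "'a \<Rightarrow> nat" where "F \<in> snd H" "k = card ((\<lambda>i. (i, g i)) ` F)"
    by (auto simp: blowup_def edge_sizes_def)
  moreover have "card ((\<lambda>i. (i, g i)) ` F) = card F"
    by (intro card_image) (auto simp: inj_on_def)
  ultimately show "k \<in> edge_sizes H"
    by (auto simp: edge_sizes_def)
qed

lemma blowup_subhyp_if_transversals_embed:
  fixes b :: "'a \<Rightarrow> nat \<Rightarrow> 'b"
  assumes "hypergraph H" and "s \<ge> 1" and b_inj: "\<And>a. a \<in> fst H \<Longrightarrow> inj_on (b a) {..<s}"
    and transversals: "\<And>h. (\<And>a. a \<in> fst H \<Longrightarrow> h a < s) \<Longrightarrow> (\<lambda>a\<in>fst H. b a (h a)) \<in> embeddings H G"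
  shows "subhyp (blowup H s) G"
proof -
  define f where "f p = b (fst p) (snd p)" for p
  have "inj_on f (fst H \<times> {..<s})"
  proof (rule inj_onI, clarsimp)
    fix a j a' j' assume p: "a \<in> fst H" "j < s" and q: "a' \<in> fst H" "j' < s" and eq: "f (a, j) = f (a', j')"
    define h where "h z = (if z = a then j else if z = a' then j' else 0)" for z
    have "inj_on (\<lambda>z\<in>fst H. b z (h z)) (fst H)"
      using transversals[of h] p q assms(2) by (auto simp: embeddings_def h_def)
    moreover have "(\<lambda>z\<in>fst H. b z (h z)) a = (\<lambda>z\<in>fst H. b z (h z)) a'"
      using eq p q by (simp add: f_def h_def)
    ultimately have "a = a'"
      using p q by (auto dest: inj_onD)
    moreover from this have "j = j'"
      using eq b_inj[OF p(1)] p q by (auto simp: f_def dest: inj_onD)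
    ultimately show "a = a' \<and> j = j'"
      by simp
  qed
  moreover have "f ` (fst H \<times> {..<s}) \<subseteq> fst G"
    using transversals[of "\<lambda>_. j" for j] by (fastforce simp: embeddings_def f_def)
  moreover have "f ` X \<in> snd G" if X: "X \<in> snd (blowup H s)" for X
  proof -
    obtain F h where F: "F \<in> snd H" "X = (\<lambda>a. (a, h a)) ` F" "\<forall>a\<in>F. h a < s"
      using X by (auto simp: blowup_def)
    have "F \<subseteq> fst H"
      using F(1) assms(1) by (auto simp: hypergraph_def)
    define h' where "h' a = (if a \<in> F then h a else 0)" for a
    have "f ` X = (\<lambda>a\<in>fst H. b a (h' a)) ` F"
      using F(2) \<open>F \<subseteq> fst H\<close> by (auto simp: f_def h'_def image_image)
    moreover have "(\<lambda>a\<in>fst H. b a (h' a)) \<in> embeddings H G"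
      using transversals[of h'] F(3) assms(2) by (auto simp: h'_def)
    then have "(\<lambda>a\<in>fst H. b a (h' a)) ` F \<in> snd G"
      using F(1) unfolding embeddings_def by blast
    ultimately show ?thesis
      by simp
  qed
  ultimately show ?thesis
    unfolding subhyp_def by (intro exI[of _ f]) (auto simp: blowup_def)
qed

lemma blowup_subhyp_if_box_of_embeddings:
  assumes "hypergraph H" and "s \<ge> 1"
    and card_W: "\<And>a. a \<in> fst H \<Longrightarrow> card (W a) = s"
    and box: "PiE (fst H) W \<subseteq> embeddings H G"
  shows "subhyp (blowup H s) G"
proof -
  have "\<forall>a\<in>fst H. \<exists>b. bij_betw b {..<s} (W a)"
  proof
    fix a assume "a \<in> fst H"
    then have "finite (W a)" and "card (W a) = s"
      using card_W assms(2) by (auto intro: card_ge_0_finite)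
    then show "\<exists>b. bij_betw b {..<s} (W a)"
      using ex_bij_betw_nat_finite[of "W a"] by (auto simp: atLeast0LessThan)
  qed
  then obtain b where b: "\<And>a. a \<in> fst H \<Longrightarrow> bij_betw (b a) {..<s} (W a)"
    by metis
  show ?thesis
  proof (rule blowup_subhyp_if_transversals_embed[OF assms(1,2)])
    show "inj_on (b a) {..<s}" if "a \<in> fst H" for a
      using b[OF that] by (simp add: bij_betw_def)
    show "(\<lambda>a\<in>fst H. b a (h a)) \<in> embeddings H G" if "\<And>a. a \<in> fst H \<Longrightarrow> h a < s" for h
      using b that box by (fastforce simp: bij_betw_def)
  qed
qed

section \<open>Averaging over induced subhypergraphs\<close>

definition injections :: "nat \<Rightarrow> nat \<Rightarrow> (nat \<Rightarrow> nat) set" where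
  "injections m n = {\<sigma> \<in> {..<m} \<rightarrow>\<^sub>E {..<n}. inj_on \<sigma> {..<m}}"

definition covering_injections :: "nat \<Rightarrow> nat \<Rightarrow> nat set \<Rightarrow> (nat \<Rightarrow> nat) set" where
  "covering_injections m n E = {\<sigma> \<in> injections m n. E \<subseteq> \<sigma> ` {..<m}}"

definition pullback :: "nat \<Rightarrow> (nat \<Rightarrow> nat) \<Rightarrow> nat hypergraph \<Rightarrow> nat hypergraph" where
  "pullback m \<sigma> G = ({..<m}, {F. F \<subseteq> {..<m} \<and> \<sigma> ` F \<in> snd G})"

lemma finite_injections: "finite (injections m n)"
  unfolding injections_def by (rule finite_subset[of _ "{..<m} \<rightarrow>\<^sub>E {..<n}"]) (auto simp: finite_PiE)

lemma injections_nonempty: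
  assumes "m \<le> n"
  shows "injections m n \<noteq> {}"
proof -
  have "restrict id {..<m} \<in> injections m n"
    using assms by (auto simp: injections_def inj_on_def)
  then show ?thesis
    by blast
qed

lemma injection_image: "\<sigma> \<in> injections m n \<Longrightarrow> \<sigma> ` {..<m} \<subseteq> {..<n}"
  by (auto simp: injections_def)

lemma exists_permutation_mapping:
  fixes E E' :: "nat set"
  assumes "E \<subseteq> {..<n}" and "E' \<subseteq> {..<n}" and "card E = card E'"
  shows "\<exists>\<pi>. bij_betw \<pi> {..<n} {..<n} \<and> \<pi> ` E = E'"
proof -
  have finite: "finite E" "finite E'"
    using assms(1,2) by (auto intro: finite_subset)
  obtain f where f: "bij_betw f E E'"
    using finite_same_card_bij[OF finite assms(3)] by blast
  have "card ({..<n} - E) = card ({..<n} - E')"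
    using assms finite by (simp add: card_Diff_subset)
  then obtain g where g: "bij_betw g ({..<n} - E) ({..<n} - E')"
    using finite_same_card_bij[of "{..<n} - E" "{..<n} - E'"] by auto
  define \<pi> where "\<pi> x = (if x \<in> E then f x else g x)" for x
  have "bij_betw \<pi> E E'"
    using f by (rule bij_betw_cong[THEN iffD1, rotated]) (simp add: \<pi>_def)
  moreover have "bij_betw \<pi> ({..<n} - E) ({..<n} - E')"
    using g by (rule bij_betw_cong[THEN iffD1, rotated]) (simp add: \<pi>_def)
  ultimately have "bij_betw \<pi> (E \<union> ({..<n} - E)) (E' \<union> ({..<n} - E'))"
    by (rule bij_betw_combine) auto
  moreover have "E \<union> ({..<n} - E) = {..<n}" "E' \<union> ({..<n} - E') = {..<n}"
    using assms by auto
  ultimately show ?thesis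
    using \<open>bij_betw \<pi> E E'\<close> by (auto simp: bij_betw_def)
qed

lemma card_covering_injections_le:
  assumes "E \<subseteq> {..<n}" and "E' \<subseteq> {..<n}" and "card E = card E'"
  shows "card (covering_injections m n E) \<le> card (covering_injections m n E')"
proof -
  obtain \<pi> where \<pi>: "bij_betw \<pi> {..<n} {..<n}" "\<pi> ` E = E'"
    using exists_permutation_mapping[OF assms] by blast
  define \<Phi> where "\<Phi> \<sigma> = restrict (\<pi> \<circ> \<sigma>) {..<m}" for \<sigma>
  show ?thesis
  proof (rule card_inj_on_le[of \<Phi>])
    show "finite (covering_injections m n E')"
      using finite_injections by (simp add: covering_injections_def)
    show "inj_on \<Phi> (covering_injections m n E)"
    proof (rule inj_onI)
      fix \<sigma>1 \<sigma>2 assume \<sigma>: "\<sigma>1 \<in> covering_injections m n E" "\<sigma>2 \<in> covering_injections m n E"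
        and eq: "\<Phi> \<sigma>1 = \<Phi> \<sigma>2"
      have "\<sigma>1 i = \<sigma>2 i" if "i < m" for i
        using fun_cong[OF eq, of i] \<pi>(1) \<sigma> that
        by (auto simp: \<Phi>_def covering_injections_def injections_def bij_betw_def dest: inj_onD)
      then show "\<sigma>1 = \<sigma>2"
        using \<sigma> by (intro extensionalityI[of _ "{..<m}"])
          (auto simp: covering_injections_def injections_def PiE_def)
    qed
    show "\<Phi> ` covering_injections m n E \<subseteq> covering_injections m n E'"
    proof clarify
      fix \<sigma> assume "\<sigma> \<in> covering_injections m n E"
      then have \<sigma>: "\<sigma> \<in> {..<m} \<rightarrow>\<^sub>E {..<n}" "inj_on \<sigma> {..<m}" "E \<subseteq> \<sigma> ` {..<m}"
        by (auto simp: covering_injections_def injections_def)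
      have "inj_on (\<pi> \<circ> \<sigma>) {..<m}"
        using \<sigma> \<pi>(1) by (intro comp_inj_on) (auto simp: bij_betw_def intro: inj_on_subset)
      moreover have "\<Phi> \<sigma> \<in> {..<m} \<rightarrow>\<^sub>E {..<n}"
        using \<sigma>(1) bij_betwE[OF \<pi>(1)] by (auto simp: \<Phi>_def)
      moreover have "E' \<subseteq> \<Phi> \<sigma> ` {..<m}"
        using \<sigma>(3) \<pi>(2) by (auto simp: \<Phi>_def)
      ultimately show "\<Phi> \<sigma> \<in> covering_injections m n E'"
        by (simp add: covering_injections_def injections_def \<Phi>_def)
    qed
  qed
qed

lemma card_covering_injections:
  assumes "m \<le> n" and "E \<subseteq> {..<n}"
  shows "card (covering_injections m n E) * (n choose card E) = card (injections m n) * (m choose card E)"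
proof -
  define k where "k = card E"
  define Ks where "Ks = {E'. E' \<subseteq> {..<n} \<and> card E' = k}"
  have finite_Ks: "finite Ks"
    by (simp add: Ks_def)
  have "card (covering_injections m n E') = card (covering_injections m n E)" if "E' \<in> Ks" for E'
    using assms(2) that by (auto simp: Ks_def k_def intro!: antisym card_covering_injections_le)
  then have "card Ks * card (covering_injections m n E) = (\<Sum>E'\<in>Ks. card (covering_injections m n E'))"
    by simp
  also have "\<dots> = (\<Sum>E'\<in>Ks. \<Sum>\<sigma>\<in>injections m n. if E' \<subseteq> \<sigma> ` {..<m} then 1 else 0)"
    using finite_injections by (simp add: covering_injections_def sum.If_cases Int_def conj_commute)
  also have "\<dots> = (\<Sum>\<sigma>\<in>injections m n. \<Sum>E'\<in>Ks. if E' \<subseteq> \<sigma> ` {..<m} then 1 else 0)"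
    by (rule sum.swap)
  also have "\<dots> = (\<Sum>\<sigma>\<in>injections m n. m choose k)"
  proof (rule sum.cong[OF refl])
    fix \<sigma> assume \<sigma>: "\<sigma> \<in> injections m n"
    then have "{E'\<in>Ks. E' \<subseteq> \<sigma> ` {..<m}} = {E'. E' \<subseteq> \<sigma> ` {..<m} \<and> card E' = k}"
      using injection_image[OF \<sigma>] by (auto simp: Ks_def dest: subset_trans)
    moreover have "card (\<sigma> ` {..<m}) = m"
      using \<sigma> by (simp add: injections_def card_image)
    ultimately show "(\<Sum>E'\<in>Ks. if E' \<subseteq> \<sigma> ` {..<m} then 1 else 0) = m choose k"
      using finite_Ks n_subsets[of "\<sigma> ` {..<m}" k] by (simp add: sum.If_cases Int_def conj_commute)
  qed
  finally show ?thesis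
    using n_subsets[of "{..<n}" k] by (simp add: Ks_def k_def mult.commute)
qed

lemma hypergraph_pullback: "hypergraph (pullback m \<sigma> G)"
  by (auto simp: pullback_def hypergraph_def)

lemma edge_sizes_pullback:
  assumes "\<sigma> \<in> injections m n"
  shows "edge_sizes (pullback m \<sigma> G) \<subseteq> edge_sizes G"
proof
  fix k assume "k \<in> edge_sizes (pullback m \<sigma> G)"
  then obtain F where F: "F \<subseteq> {..<m}" "\<sigma> ` F \<in> snd G" "k = card F"
    by (auto simp: edge_sizes_def pullback_def)
  have "card (\<sigma> ` F) = card F"
    using assms F(1) by (intro card_image) (auto simp: injections_def intro: inj_on_subset)
  then show "k \<in> edge_sizes G"
    using F by (auto simp: edge_sizes_def intro!: image_eqI[of _ _ "\<sigma> ` F"])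
qed

lemma pullback_embedding:
  assumes "\<sigma> \<in> injections m n" and "fst G = {..<n}"
  shows "\<sigma> \<in> embeddings (pullback m \<sigma> G) G"
  using assms by (auto simp: embeddings_def pullback_def injections_def)

lemma h_dens_pullback:
  assumes "\<sigma> \<in> injections m n" and "finite (snd G)"
  shows "h_dens m (pullback m \<sigma> G) = (\<Sum>E | E \<in> snd G \<and> E \<subseteq> \<sigma> ` {..<m}. 1 / real (m choose card E))"
proof -
  have inj: "inj_on \<sigma> {..<m}"
    using assms(1) by (simp add: injections_def)
  define S where "S = {F. F \<subseteq> {..<m} \<and> \<sigma> ` F \<in> snd G}"
  have inj_image: "inj_on (image \<sigma>) S"
    using inj_on_image_Pow[OF inj] by (rule inj_on_subset) (auto simp: S_def)
  have image_S: "image \<sigma> ` S = {E. E \<in> snd G \<and> E \<subseteq> \<sigma> ` {..<m}}"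
  proof
    show "{E. E \<in> snd G \<and> E \<subseteq> \<sigma> ` {..<m}} \<subseteq> image \<sigma> ` S"
    proof clarify
      fix E assume E: "E \<in> snd G" "E \<subseteq> \<sigma> ` {..<m}"
      then have "\<sigma> ` {i \<in> {..<m}. \<sigma> i \<in> E} = E"
        by auto
      then show "E \<in> image \<sigma> ` S"
        using E(1) unfolding S_def by (intro image_eqI[of _ _ "{i \<in> {..<m}. \<sigma> i \<in> E}"]) auto
    qed
  qed (auto simp: S_def)
  have "h_dens m (pullback m \<sigma> G) = (\<Sum>F\<in>S. 1 / real (m choose card (\<sigma> ` F)))"
    unfolding h_dens_def pullback_def S_def using inj
    by (intro sum.cong) (auto simp: card_image inj_on_subset)
  also have "\<dots> = (\<Sum>E\<in>image \<sigma> ` S. 1 / real (m choose card E))"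
    by (simp add: sum.reindex[OF inj_image])
  finally show ?thesis
    by (simp only: image_S)
qed

text \<open>An edge \<open>E\<close> of \<open>G\<close> survives in \<open>card (covering_injections m n E)\<close> pullbacks, a number
  proportional to \<open>binom m |E| / binom n |E|\<close>: exactly compensated by the weights of \<open>h\<close>.\<close>
lemma sum_h_dens_pullback:
  assumes "snd G \<subseteq> Pow {..<n}" and "\<forall>F\<in>snd G. card F \<le> m" and "m \<le> n"
  shows "(\<Sum>\<sigma>\<in>injections m n. h_dens m (pullback m \<sigma> G)) = real (card (injections m n)) * h_dens n G"
proof -
  have finite_G: "finite (snd G)"
    using assms(1) by (rule finite_subset) auto
  have "(\<Sum>\<sigma>\<in>injections m n. h_dens m (pullback m \<sigma> G))
      = (\<Sum>\<sigma>\<in>injections m n. \<Sum>E\<in>snd G. if E \<subseteq> \<sigma> ` {..<m} then 1 / real (m choose card E) else 0)"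
    using finite_G by (intro sum.cong) (simp_all add: h_dens_pullback sum.inter_filter)
  also have "\<dots> = (\<Sum>E\<in>snd G. \<Sum>\<sigma>\<in>injections m n. if E \<subseteq> \<sigma> ` {..<m} then 1 / real (m choose card E) else 0)"
    by (rule sum.swap)
  also have "\<dots> = (\<Sum>E\<in>snd G. real (card (covering_injections m n E)) / real (m choose card E))"
    using finite_injections by (intro sum.cong) (simp_all add: sum.If_cases covering_injections_def Int_def)
  also have "\<dots> = (\<Sum>E\<in>snd G. real (card (injections m n)) * (1 / real (n choose card E)))"
  proof (rule sum.cong[OF refl])
    fix E assume E: "E \<in> snd G"
    then have "E \<subseteq> {..<n}" and "card E \<le> m"
      using assms(1,2) by auto
    then have "real (m choose card E) > 0" "real (n choose card E) > 0"
      and "real (card (covering_injections m n E)) * real (n choose card E) =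
           real (card (injections m n)) * real (m choose card E)"
      using card_covering_injections[OF assms(3)] assms(3) by (simp_all flip: of_nat_mult)
    then show "real (card (covering_injections m n E)) / real (m choose card E) =
        real (card (injections m n)) * (1 / real (n choose card E))"
      by (simp add: field_simps)
  qed
  also have "\<dots> = real (card (injections m n)) * h_dens n G"
    by (simp add: h_dens_def sum_distrib_left)
  finally show ?thesis .
qed

section \<open>The densities \<open>\<pi>\<^sub>n\<close>\<close>

definition admissible :: "'b hypergraph \<Rightarrow> nat \<Rightarrow> nat hypergraph set" where
  "admissible H n = {G. hypergraph G \<and> fst G = {..<n} \<and> edge_sizes G \<subseteq> edge_sizes H \<and> \<not> subhyp H G}"

lemma pi_n_eq_Max_admissible: "pi_n H n = Max (h_dens n ` admissible H n)"
  unfolding pi_n_def admissible_def by (rule arg_cong[where f = Max]) auto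

lemma finite_admissible: "finite (admissible H n)"
proof (rule finite_subset)
  show "admissible H n \<subseteq> {{..<n}} \<times> Pow (Pow {..<n})"
    by (force simp: admissible_def hypergraph_def)
qed auto

lemma h_dens_le_pi_n: "G \<in> admissible H n \<Longrightarrow> h_dens n G \<le> pi_n H n"
  unfolding pi_n_eq_Max_admissible by (intro Max_ge finite_imageI finite_admissible) auto

lemma pi_n_attained:
  assumes "admissible H n \<noteq> {}"
  obtains G where "G \<in> admissible H n" and "pi_n H n = h_dens n G"
proof -
  have "Max (h_dens n ` admissible H n) \<in> h_dens n ` admissible H n"
    using assms by (intro Max_in finite_imageI finite_admissible) auto
  then show ?thesis
    using that unfolding pi_n_eq_Max_admissible by auto
qed

lemma edgeless_admissible: "snd H \<noteq> {} \<Longrightarrow> ({..<n}, {}) \<in> admissible H n"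
  by (auto simp: admissible_def hypergraph_def edge_sizes_def subhyp_def)

lemma pi_n_nonneg: "snd H \<noteq> {} \<Longrightarrow> 0 \<le> pi_n H n"
  using h_dens_le_pi_n[OF edgeless_admissible] by (simp add: h_dens_def)

lemma admissible_edgeless_empty:
  assumes "hypergraph H" and "snd H = {}" and "card (fst H) \<le> n"
  shows "admissible H n = {}"
proof -
  have "finite (fst H)"
    using assms(1) by (simp add: hypergraph_def)
  then obtain h where h: "bij_betw h (fst H) {0..<card (fst H)}"
    using ex_bij_betw_finite_nat by blast
  then have "inj_on h (fst H)" "h ` fst H \<subseteq> {..<n}"
    using assms(3) by (auto simp: bij_betw_def)
  then have "subhyp H G" if "fst G = {..<n}" for G
    unfolding subhyp_def using that assms(2) by auto
  then show ?thesis
    by (auto simp: admissible_def)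
qed

lemma admissible_mono:
  assumes "subhyp H' H" and "edge_sizes H' = edge_sizes H"
  shows "admissible H' n \<subseteq> admissible H n"
  using subhyp_trans[OF assms(1)] assms(2) by (auto simp: admissible_def)

lemma pi_n_mono:
  assumes "subhyp H' H" and "edge_sizes H' = edge_sizes H" and "snd H' \<noteq> {}"
  shows "pi_n H' n \<le> pi_n H n"
  unfolding pi_n_eq_Max_admissible
  by (intro Max_mono image_mono admissible_mono assms(1,2) finite_imageI finite_admissible)
    (use edgeless_admissible[OF assms(3)] in blast)

lemma h_dens_le_card_edge_sizes:
  assumes "hypergraph G" and "fst G = {..<m}"
  shows "h_dens m G \<le> real (card (edge_sizes G))"
proof -
  have finite_G: "finite (snd G)"
    using assms by (auto simp: hypergraph_def intro: finite_subset)
  have "h_dens m G = (\<Sum>k\<in>card ` snd G. \<Sum>F | F \<in> snd G \<and> card F = k. 1 / real (m choose card F))"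
    unfolding h_dens_def by (rule sum.image_gen[OF finite_G])
  also have "\<dots> \<le> (\<Sum>k\<in>card ` snd G. 1)"
  proof (rule sum_mono)
    fix k assume "k \<in> card ` snd G"
    then have "k \<le> m"
      using assms by (auto simp: hypergraph_def intro!: card_mono[of "{..<m}", simplified])
    have "{F. F \<in> snd G \<and> card F = k} \<subseteq> {F. F \<subseteq> {..<m} \<and> card F = k}"
      using assms by (auto simp: hypergraph_def)
    then have "card {F. F \<in> snd G \<and> card F = k} \<le> m choose k"
      using card_mono[of "{F. F \<subseteq> {..<m} \<and> card F = k}"] n_subsets[of "{..<m}" k] by simp
    then show "(\<Sum>F | F \<in> snd G \<and> card F = k. 1 / real (m choose card F)) \<le> 1"
      using \<open>k \<le> m\<close> by (simp add: divide_le_eq_1)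
  qed
  also have "\<dots> = real (card (edge_sizes G))"
    by (simp add: edge_sizes_def)
  finally show ?thesis .
qed

lemma pi_n_Suc_le:
  assumes "snd H \<noteq> {}" and "\<forall>k\<in>edge_sizes H. k \<le> n"
  shows "pi_n H (Suc n) \<le> pi_n H n"
proof -
  obtain G where G: "G \<in> admissible H (Suc n)" and pi_G: "pi_n H (Suc n) = h_dens (Suc n) G"
    using pi_n_attained edgeless_admissible[OF assms(1)] by blast
  then have G_props: "hypergraph G" "fst G = {..<Suc n}" "edge_sizes G \<subseteq> edge_sizes H" "\<not> subhyp H G"
    by (auto simp: admissible_def)
  have "pullback n \<sigma> G \<in> admissible H n" if \<sigma>: "\<sigma> \<in> injections n (Suc n)" for \<sigma>
  proof -
    have "subhyp (pullback n \<sigma> G) G"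
      using pullback_embedding[OF \<sigma> G_props(2)] subhyp_iff_embeddings[OF hypergraph_pullback] by blast
    then have "\<not> subhyp H (pullback n \<sigma> G)"
      using G_props(4) subhyp_trans by blast
    then show ?thesis
      using G_props(3) edge_sizes_pullback[OF \<sigma>, of G] hypergraph_pullback[of n \<sigma> G]
      by (auto simp: admissible_def pullback_def)
  qed
  then have "(\<Sum>\<sigma>\<in>injections n (Suc n). h_dens n (pullback n \<sigma> G)) \<le> (\<Sum>\<sigma>\<in>injections n (Suc n). pi_n H n)"
    by (intro sum_mono h_dens_le_pi_n)
  moreover have "(\<Sum>\<sigma>\<in>injections n (Suc n). h_dens n (pullback n \<sigma> G)) =
      real (card (injections n (Suc n))) * h_dens (Suc n) G"
    using G_props assms(2) by (intro sum_h_dens_pullback) (auto simp: hypergraph_def edge_sizes_def)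
  moreover have "card (injections n (Suc n)) > 0"
    using injections_nonempty[of n "Suc n"] finite_injections by (simp add: card_gt_0_iff)
  ultimately show ?thesis
    using pi_G by simp
qed

lemma pi_n_convergent:
  assumes "hypergraph H" and "snd H \<noteq> {}"
  obtains L where "(\<lambda>n. pi_n H n) \<longlonglongrightarrow> L"
proof -
  define K where "K = Max (edge_sizes H)"
  have "finite (edge_sizes H)"
    using assms(1) by (auto simp: hypergraph_def edge_sizes_def intro: finite_subset)
  then have "\<forall>k\<in>edge_sizes H. k \<le> i + K" for i
    by (auto simp: K_def trans_le_add2)
  then have "decseq (\<lambda>i. pi_n H (i + K))"
    using pi_n_Suc_le[OF assms(2)] by (intro decseq_SucI) simp
  then obtain L where "(\<lambda>i. pi_n H (i + K)) \<longlonglongrightarrow> L"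
    using decseq_convergent[of _ 0] pi_n_nonneg[OF assms(2)] by blast
  then show ?thesis
    using that LIMSEQ_offset by blast
qed

section \<open>Supersaturation\<close>

lemma h_dens_le_pi_n_plus_subhyp_pullbacks:
  fixes H' :: "'b hypergraph"
  assumes "hypergraph H'" and "snd H' \<noteq> {}" and "hypergraph G" and "fst G = {..<n}"
    and "edge_sizes G \<subseteq> edge_sizes H'" and "\<forall>F\<in>snd G. card F \<le> m" and "m \<le> n"
  shows "real (card (injections m n)) * h_dens n G \<le> real (card (injections m n)) * pi_n H' m
    + real (card (edge_sizes H')) * real (card {\<sigma> \<in> injections m n. subhyp H' (pullback m \<sigma> G)})"
proof -
  define C where "C = real (card (edge_sizes H'))"
  define good where "good = {\<sigma> \<in> injections m n. subhyp H' (pullback m \<sigma> G)}"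
  have "finite (edge_sizes H')"
    using assms(1) by (auto simp: hypergraph_def edge_sizes_def intro: finite_subset)
  have "h_dens m (pullback m \<sigma> G) \<le> pi_n H' m + (if \<sigma> \<in> good then C else 0)"
    if \<sigma>: "\<sigma> \<in> injections m n" for \<sigma>
  proof (cases "\<sigma> \<in> good")
    case True
    have "h_dens m (pullback m \<sigma> G) \<le> real (card (edge_sizes (pullback m \<sigma> G)))"
      by (intro h_dens_le_card_edge_sizes hypergraph_pullback) (simp add: pullback_def)
    also have "\<dots> \<le> C"
      using edge_sizes_pullback[OF \<sigma>, of G] assms(5) \<open>finite (edge_sizes H')\<close>
      by (simp add: C_def card_mono)
    finally have "h_dens m (pullback m \<sigma> G) \<le> pi_n H' m + C"
      using pi_n_nonneg[OF assms(2), of m] by linarith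
    then show ?thesis
      using True by simp
  next
    case False
    then have "pullback m \<sigma> G \<in> admissible H' m"
      using \<sigma> edge_sizes_pullback[OF \<sigma>, of G] assms(5) hypergraph_pullback[of m \<sigma> G]
      by (auto simp: admissible_def good_def pullback_def)
    then show ?thesis
      using False h_dens_le_pi_n by fastforce
  qed
  then have "(\<Sum>\<sigma>\<in>injections m n. h_dens m (pullback m \<sigma> G)) \<le>
      (\<Sum>\<sigma>\<in>injections m n. pi_n H' m + (if \<sigma> \<in> good then C else 0))"
    by (rule sum_mono)
  also have "\<dots> = real (card (injections m n)) * pi_n H' m + C * real (card good)"
    using finite_injections
    by (simp add: sum.distrib sum.If_cases good_def Int_def conj_commute)
  finally show ?thesis
    using sum_h_dens_pullback[of G n m] assms(3,4,6,7)
    by (simp add: C_def good_def hypergraph_def)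
qed

lemma card_subhyp_pullbacks_le:
  fixes H' :: "'b hypergraph"
  assumes "hypergraph H'" and "fst G = {..<n}" and "m \<le> n"
  shows "card {\<sigma> \<in> injections m n. subhyp H' (pullback m \<sigma> G)} * (n choose card (fst H'))
    \<le> card (embeddings H' G) * (card (injections m n) * (m choose card (fst H')))"
proof -
  define v where "v = card (fst H')"
  define good where "good = {\<sigma> \<in> injections m n. subhyp H' (pullback m \<sigma> G)}"
  have "finite (embeddings H' G)"
    using assms(1,2) by (auto simp: embeddings_def hypergraph_def finite_PiE intro: finite_subset[of _ "fst H' \<rightarrow>\<^sub>E {..<n}"])
  have "good \<subseteq> (\<Union>g\<in>embeddings H' G. covering_injections m n (g ` fst H'))"
  proof
    fix \<sigma> assume "\<sigma> \<in> good"
    then have \<sigma>: "\<sigma> \<in> injections m n" and "subhyp H' (pullback m \<sigma> G)"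
      by (auto simp: good_def)
    then obtain f where f: "f \<in> embeddings H' (pullback m \<sigma> G)"
      using subhyp_iff_embeddings[OF assms(1)] by blast
    then have "restrict (\<sigma> \<circ> f) (fst H') \<in> embeddings H' G"
      using embeddings_compose[OF assms(1) f pullback_embedding[OF \<sigma> assms(2)]] by blast
    moreover have "restrict (\<sigma> \<circ> f) (fst H') ` fst H' \<subseteq> \<sigma> ` {..<m}"
      using f by (auto simp: embeddings_def pullback_def)
    ultimately show "\<sigma> \<in> (\<Union>g\<in>embeddings H' G. covering_injections m n (g ` fst H'))"
      using \<sigma> unfolding covering_injections_def by blast
  qed
  then have "card good \<le> card (\<Union>g\<in>embeddings H' G. covering_injections m n (g ` fst H'))"
    using \<open>finite (embeddings H' G)\<close> finite_injections
    by (intro card_mono) (auto simp: covering_injections_def)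
  also have "\<dots> \<le> (\<Sum>g\<in>embeddings H' G. card (covering_injections m n (g ` fst H')))"
    using \<open>finite (embeddings H' G)\<close> by (rule card_UN_le)
  finally have "card good * (n choose v) \<le>
      (\<Sum>g\<in>embeddings H' G. card (covering_injections m n (g ` fst H')) * (n choose v))"
    by (simp add: mult_right_mono flip: sum_distrib_right)
  also have "\<dots> = (\<Sum>g\<in>embeddings H' G. card (injections m n) * (m choose v))"
  proof (rule sum.cong[OF refl])
    fix g assume "g \<in> embeddings H' G"
    then have "g ` fst H' \<subseteq> {..<n}" and "card (g ` fst H') = v"
      using assms(2) by (auto simp: embeddings_def v_def card_image)
    then show "card (covering_injections m n (g ` fst H')) * (n choose v) = card (injections m n) * (m choose v)"
      using card_covering_injections[OF assms(3), of "g ` fst H'"] by simp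
  qed
  finally show ?thesis
    by (simp add: good_def v_def)
qed

lemma card_embeddings_lower_bound:
  fixes H' :: "'b hypergraph"
  assumes "hypergraph H'" and "snd H' \<noteq> {}" and "hypergraph G" and "fst G = {..<n}"
    and "edge_sizes G \<subseteq> edge_sizes H'" and "card (fst H') \<le> m" and "m \<le> n"
  shows "(h_dens n G - pi_n H' m) * real (n choose card (fst H'))
    \<le> real (card (edge_sizes H')) * real (m choose card (fst H')) * real (card (embeddings H' G))"
proof -
  define v where "v = card (fst H')"
  define I where "I = real (card (injections m n))"
  define good where "good = real (card {\<sigma> \<in> injections m n. subhyp H' (pullback m \<sigma> G)})"
  have "card F \<le> m" if F: "F \<in> snd G" for F
  proof -
    obtain F' where "F' \<in> snd H'" "card F = card F'"
      using assms(5) F by (auto simp: edge_sizes_def)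
    moreover have "card F' \<le> card (fst H')"
      using assms(1) \<open>F' \<in> snd H'\<close> by (auto simp: hypergraph_def intro: card_mono)
    ultimately show ?thesis
      using assms(6) by simp
  qed
  then have "I * h_dens n G \<le> I * pi_n H' m + real (card (edge_sizes H')) * good"
    unfolding I_def good_def using assms(7) by (intro h_dens_le_pi_n_plus_subhyp_pullbacks assms(1-5)) auto
  then have "I * (h_dens n G - pi_n H' m) \<le> real (card (edge_sizes H')) * good"
    by (simp add: right_diff_distrib)
  then have "I * (h_dens n G - pi_n H' m) * real (n choose v) \<le>
      real (card (edge_sizes H')) * good * real (n choose v)"
    by (rule mult_right_mono) simp
  also have "\<dots> = real (card (edge_sizes H')) * (good * real (n choose v))"
    by simp
  also have "\<dots> \<le> real (card (edge_sizes H')) * (real (card (embeddings H' G)) * (I * real (m choose v)))"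
    using card_subhyp_pullbacks_le[OF assms(1,4,7)]
    by (intro mult_left_mono) (simp_all add: good_def I_def v_def flip: of_nat_mult)
  finally have "I * ((h_dens n G - pi_n H' m) * real (n choose v)) \<le>
      I * (real (card (edge_sizes H')) * real (m choose v) * real (card (embeddings H' G)))"
    by (simp add: mult_ac)
  moreover have "I > 0"
    using injections_nonempty[OF assms(7)] finite_injections by (simp add: I_def card_gt_0_iff)
  ultimately show ?thesis
    by (simp add: v_def)
qed

lemma card_embeddings_polynomial_lower_bound:
  fixes H' :: "'b hypergraph"
  assumes "hypergraph H'" and "snd H' \<noteq> {}" and "hypergraph G" and "fst G = {..<n}"
    and "edge_sizes G \<subseteq> edge_sizes H'" and "card (fst H') \<le> m" and "m \<le> n"
    and "pi_n H' m + \<delta> \<le> h_dens n G" and "\<delta> \<ge> 0"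
  shows "\<delta> / (real (card (edge_sizes H')) * real (m choose card (fst H')) * real (card (fst H')) ^ card (fst H'))
    * real n ^ card (fst H') \<le> real (card (embeddings H' G))"
proof -
  define v where "v = card (fst H')"
  define D where "D = real (card (edge_sizes H')) * real (m choose v)"
  have "finite (edge_sizes H')"
    using assms(1) by (auto simp: hypergraph_def edge_sizes_def intro: finite_subset)
  then have "D > 0"
    using assms(2,6) by (auto simp: D_def v_def edge_sizes_def card_gt_0_iff)
  have "real n ^ v / real v ^ v \<le> real (n choose v)"
    using binomial_ge_n_over_k_pow_k[of v n] assms(6,7) by (simp add: v_def power_divide)
  then have "\<delta> * (real n ^ v / real v ^ v) \<le> (h_dens n G - pi_n H' m) * real (n choose v)"
    using assms(8,9) by (intro mult_mono) auto
  also have "\<dots> \<le> D * real (card (embeddings H' G))"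
    using card_embeddings_lower_bound[OF assms(1-7)] by (simp add: D_def v_def)
  finally have "\<delta> * (real n ^ v / real v ^ v) \<le> D * real (card (embeddings H' G))" .
  moreover have "real v ^ v > 0"
    by (cases v) auto
  ultimately have "\<delta> / (D * real v ^ v) * real n ^ v \<le> real (card (embeddings H' G))"
    using \<open>D > 0\<close> by (simp add: field_simps)
  then show ?thesis
    by (simp add: D_def v_def mult.assoc)
qed

lemma dense_hypergraph_contains_blowup:
  fixes H' :: "'b hypergraph"
  assumes "hypergraph H'" and "snd H' \<noteq> {}" and "s \<ge> 1"
    and "(\<lambda>n. pi_n H' n) \<longlonglongrightarrow> L" and "\<epsilon> > 0"
  obtains N where "\<And>n G. n \<ge> N \<Longrightarrow> hypergraph G \<Longrightarrow> fst G = {..<n} \<Longrightarrow> edge_sizes G \<subseteq> edge_sizes H'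
    \<Longrightarrow> L + \<epsilon> < h_dens n G \<Longrightarrow> subhyp (blowup H' s) G"
proof -
  define v where "v = card (fst H')"
  have "eventually (\<lambda>m. pi_n H' m < L + \<epsilon> / 2 \<and> v \<le> m) sequentially"
    using order_tendstoD(2)[OF assms(4), of "L + \<epsilon> / 2"] assms(5)
    by (auto intro: eventually_conj eventually_ge_at_top)
  then obtain m where m: "pi_n H' m < L + \<epsilon> / 2" "v \<le> m"
    using eventually_sequentially by auto
  define c where "c = \<epsilon> / 2 / (real (card (edge_sizes H')) * real (m choose v) * real v ^ v)"
  have "finite (edge_sizes H')" "real v ^ v > 0"
    using assms(1) by (auto simp: hypergraph_def edge_sizes_def intro: finite_subset)
  then have "c > 0"
    using assms(2,5) m(2) by (auto simp: c_def edge_sizes_def card_gt_0_iff)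
  then obtain N_box where N_box: "\<forall>n\<ge>N_box. \<forall>T \<subseteq> PiE (fst H') (\<lambda>_. {..<n}). c * real n ^ v \<le> real (card T) \<longrightarrow>
      (\<exists>W. (\<forall>i\<in>fst H'. W i \<subseteq> {..<n} \<and> card (W i) = s) \<and> PiE (fst H') W \<subseteq> T)"
    using dense_set_of_tuples_contains_box[of "fst H'" c s] assms(1,3) by (auto simp: hypergraph_def v_def)
  show ?thesis
  proof (rule that[of "max N_box m"])
    fix n and G :: "nat hypergraph"
    assume n: "max N_box m \<le> n" and G: "hypergraph G" "fst G = {..<n}" "edge_sizes G \<subseteq> edge_sizes H'"
      and dense: "L + \<epsilon> < h_dens n G"
    have "c * real n ^ v \<le> real (card (embeddings H' G))"
      unfolding c_def v_def using m dense n assms(5)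
      by (intro card_embeddings_polynomial_lower_bound[OF assms(1,2) G]) (auto simp: v_def)
    moreover have "embeddings H' G \<subseteq> PiE (fst H') (\<lambda>_. {..<n})"
      using G(2) by (auto simp: embeddings_def)
    ultimately obtain W where "\<forall>i\<in>fst H'. card (W i) = s" "PiE (fst H') W \<subseteq> embeddings H' G"
      using N_box n by (meson max.boundedE)
    then show "subhyp (blowup H' s) G"
      by (intro blowup_subhyp_if_box_of_embeddings assms(1,3)) auto
  qed
qed

lemma pi_n_eventually_le:
  fixes H :: "'a hypergraph" and H' :: "'b hypergraph"
  assumes "hypergraph H" and "hypergraph H'" and "s \<ge> 1" and "subhyp H (blowup H' s)"
    and "snd H \<noteq> {}" and "snd H' \<noteq> {}" and "(\<lambda>n. pi_n H' n) \<longlonglongrightarrow> L" and "\<epsilon> > 0"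
  shows "eventually (\<lambda>n. pi_n H n \<le> L + \<epsilon>) sequentially"
proof -
  obtain N where N: "\<And>n G. n \<ge> N \<Longrightarrow> hypergraph G \<Longrightarrow> fst G = {..<n} \<Longrightarrow> edge_sizes G \<subseteq> edge_sizes H'
    \<Longrightarrow> L + \<epsilon> < h_dens n G \<Longrightarrow> subhyp (blowup H' s) G"
    using dense_hypergraph_contains_blowup[OF assms(2,6,3,7,8)] by blast
  have "pi_n H n \<le> L + \<epsilon>" if n: "n \<ge> N" for n
  proof -
    obtain G where G: "G \<in> admissible H n" and pi_G: "pi_n H n = h_dens n G"
      using pi_n_attained edgeless_admissible[OF assms(5)] by blast
    then have "edge_sizes G \<subseteq> edge_sizes H'"
      using edge_sizes_subhyp[OF assms(1,4)] edge_sizes_blowup[of H' s] by (auto simp: admissible_def)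
    moreover have "hypergraph G" "fst G = {..<n}" "\<not> subhyp H G"
      using G by (auto simp: admissible_def)
    ultimately have "\<not> L + \<epsilon> < h_dens n G"
      using N[OF n] subhyp_trans[OF assms(4)] by blast
    then show ?thesis
      using pi_G by simp
  qed
  then show ?thesis
    using eventually_sequentially by blast
qed

text \<open>Without edges, every hypergraph on at least \<open>|V(H)|\<close> vertices contains \<open>H\<close>, so both
  \<open>\<pi>\<^sub>n\<close> are eventually the junk value \<open>Max {}\<close>.\<close>
lemma pi_lim_edgeless:
  assumes "hypergraph H" and "hypergraph H'" and "snd H = {}" and "snd H' = {}"
  shows "pi_lim H = pi_lim H'"
proof -
  have "eventually (\<lambda>n. pi_n H n = pi_n H' n) sequentially"
    using admissible_edgeless_empty[OF assms(1,3)] admissible_edgeless_empty[OF assms(2,4)]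
    by (auto simp: pi_n_eq_Max_admissible eventually_sequentially intro!: exI[of _ "card (fst H) + card (fst H')"])
  then show ?thesis
    unfolding pi_lim_def lim_def using tendsto_cong by metis
qed

theorem mainTheorem5:
  fixes H :: "'a hypergraph" and H' :: "'b hypergraph" and s :: nat
  assumes "hypergraph H" and "hypergraph H'"
    and "s \<ge> 2"
    and "subhyp H' H" and "subhyp H (blowup H' s)"
  shows "pi_lim H = pi_lim H'"
proof -
  have sizes: "edge_sizes H' = edge_sizes H"
    using edge_sizes_subhyp[OF assms(1,5)] edge_sizes_blowup edge_sizes_subhyp[OF assms(2,4)] by blast
  then have edges_iff: "snd H = {} \<longleftrightarrow> snd H' = {}"
    by (auto simp: edge_sizes_def)
  show ?thesis
  proof (cases "snd H' = {}")
    case True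
    then show ?thesis
      using pi_lim_edgeless[OF assms(1,2)] edges_iff by blast
  next
    case False
    then have "snd H \<noteq> {}"
      using edges_iff by blast
    obtain L L' where L: "(\<lambda>n. pi_n H n) \<longlonglongrightarrow> L" and L': "(\<lambda>n. pi_n H' n) \<longlonglongrightarrow> L'"
      using pi_n_convergent[OF assms(1) \<open>snd H \<noteq> {}\<close>] pi_n_convergent[OF assms(2) False] by metis
    have "L' \<le> L"
      using LIMSEQ_le[OF L' L] pi_n_mono[OF assms(4) sizes False] by blast
    moreover have "L \<le> L' + \<epsilon>" if "\<epsilon> > 0" for \<epsilon>
      using pi_n_eventually_le[OF assms(1,2) _ assms(5) \<open>snd H \<noteq> {}\<close> False L' that] assms(3)
      by (intro tendsto_le[OF _ tendsto_const L]) auto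
    ultimately show ?thesis
      unfolding pi_lim_def using limI[OF L] limI[OF L'] field_le_epsilon by fastforce
  qed
qed

end
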